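(* Let $n_{\mathrm w},m\in\mathbb{N}$, let $\gamma:\mathbb{R}^{n_{\mathrm w}}\to\mathbb{R}$ be a convex piecewise quadratic function, and let $\bar A\in\mathbb{R}^{m}$, $\bar B\in\mathbb{R}^{m\times n_{\mathrm w}}$, $\bar C\in\mathbb{R}^{m}$. Let $N\ge 1$ and $Z_0<Z_1<\dots<Z_N$ be real numbers, and let $\varphi:\mathbb{R}\to\mathbb{R}$ be a convex piecewise quadratic function on $[Z_0,Z_N]$ of the form $$\varphi(z)=\tfrac12 h_r z^2+f_r z+g_r\quad \text{if } z\in[Z_{r-1},Z_r],\ r\in\{1,\dots,N\},$$ with $h_r,f_r,g_r\in\mathbb{R}$ such that for every $r\in\{1,\dots,N-1\}$: $h_r>0$ or $[f_r\ g_r]\neq[f_{r+1}\ g_{r+1}]$. Consider the optimization problem $$\min_{w,y_1,\dots,y_N}\ \gamma(w)+\varphi(Z_0)+\sum_{r=1}^N\big[\varphi(y_r)-\varphi(Z_{r-1})\big]$$ subject to $Z_{r-1}\le y_r\le Z_r$ for $r=1,\dots,N$, and $\bar A\big[Z_0+\sum_{r=1}^N (y_r-Z_{r-1})\big]+\bar B w\le \bar C$. Let $w^*,y_1^*,\dots,y_N^*$ be an optimizer of this problem. Then: (i) for every $r\in\{2,\dots,N\}$, if $y_r^*>Z_{r-1}$ then $y_s^*=Z_s$ for all $s=1,\dots,r-1$; (ii) for every $r\in\{1,\dots,N-1\}$, if $y_r^*=Z_{r-1}$ then $y_s^*=Z_{s-1}$ for all $s=r+1,\dots,N$; (iii) with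 $z^*:=Z_0+\sum_{r=1}^N (y_r^*-Z_{r-1})$, the pair $(w^*,z^* )$ is an optimizer of the problem $$\min_{w,z}\ \gamma(w)+\varphi(z)\quad\text{s.t.}\quad Z_0\le z\le Z_N,\quad \bar A z+\bar B w\le \bar C.$$ *)

theory Defs
  imports "HOL-Analysis.Analysis"
begin

definition piecewise_quadratic :: "(real^'n \<Rightarrow> real) \<Rightarrow> bool" where
  "piecewise_quadratic \<gamma> \<longleftrightarrow>
     (\<exists>P. finite P \<and> (\<forall>S\<in>P. polyhedron S) \<and> \<Union>P = UNIV \<and>
        (\<forall>S\<in>P. \<exists>(Q::real^'n^'n) (q::real^'n) (c::real).
            \<forall>x\<in>S. \<gamma> x = (1/2) * (x \<bullet> (Q *v x)) + q \<bullet> x + c))"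

definition convex_piecewise_quadratic :: "(real^'n \<Rightarrow> real) \<Rightarrow> bool" where
  "convex_piecewise_quadratic \<gamma> \<longleftrightarrow> convex_on UNIV \<gamma> \<and> piecewise_quadratic \<gamma>"

definition vec_le :: "real^'m \<Rightarrow> real^'m \<Rightarrow> bool" where
  "vec_le u v \<longleftrightarrow> (\<forall>i. u $ i \<le> v $ i)"

definition lifted_feasible ::
  "nat \<Rightarrow> (nat \<Rightarrow> real) \<Rightarrow> real^'m \<Rightarrow> real^'n^'m \<Rightarrow> real^'m \<Rightarrow> real^'n \<Rightarrow> (nat \<Rightarrow> real) \<Rightarrow> bool" where
  "lifted_feasible N Z A B C w y \<longleftrightarrow>
     (\<forall>r\<in>{1..N}. Z (r - 1) \<le> y r \<and> y r \<le> Z r) \<and>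
     vec_le ((Z 0 + (\<Sum>r=1..N. y r - Z (r - 1))) *\<^sub>R A + B *v w) C"

definition lifted_obj ::
  "(real^'n \<Rightarrow> real) \<Rightarrow> (real \<Rightarrow> real) \<Rightarrow> nat \<Rightarrow> (nat \<Rightarrow> real) \<Rightarrow> real^'n \<Rightarrow> (nat \<Rightarrow> real) \<Rightarrow> real" where
  "lifted_obj \<gamma> \<phi> N Z w y = \<gamma> w + \<phi> (Z 0) + (\<Sum>r=1..N. \<phi> (y r) - \<phi> (Z (r - 1)))"

definition orig_feasible ::
  "nat \<Rightarrow> (nat \<Rightarrow> real) \<Rightarrow> real^'m \<Rightarrow> real^'n^'m \<Rightarrow> real^'m \<Rightarrow> real^'n \<Rightarrow> real \<Rightarrow> bool" where
  "orig_feasible N Z A B C w z \<longleftrightarrow>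
     Z 0 \<le> z \<and> z \<le> Z N \<and> vec_le (z *\<^sub>R A + B *v w) C"

end

theory Submission
  imports Defs
begin

text \<open>Convexity makes the increments \<open>\<phi>(u + e) - \<phi> u\<close> nondecreasing in \<open>u\<close>, and the
nondegeneracy condition makes them jump strictly across every breakpoint \<open>Z s\<close>.
Hence if a segment \<open>s\<close> is not full while a later segment \<open>r\<close> is used, moving a small
amount from \<open>y r\<close> to \<open>y s\<close> keeps \<open>z = Z 0 + \<Sum>(y r - Z (r - 1))\<close>, and with it the coupling
constraint, but strictly lowers the objective. So an optimizer fills the segments in order;
for such fillings the objective telescopes to \<open>\<gamma> w + \<phi> z\<close>, and every
\<open>z \<in> [Z 0, Z N]\<close> is realised by one, namely by clamping \<open>z\<close> to each segment.\<close>

lemma sum_diff_pred_telescope: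
  fixes F :: "nat \<Rightarrow> 'a::ab_group_add"
  shows "(\<Sum>s=1..n. F s - F (s - 1)) = F n - F 0"
  by (induction n) (auto simp: sum.cl_ivl_Suc)

lemma convex_on_increment_mono:
  fixes \<phi> :: "real \<Rightarrow> real"
  assumes conv: "convex_on I \<phi>" and I: "u \<in> I" "v + d \<in> I" and "u \<le> v" "0 \<le> d"
  shows "\<phi> (u + d) - \<phi> u \<le> \<phi> (v + d) - \<phi> v"
proof (cases "v - u + d = 0")
  case True
  then have "u = v" "d = 0" using assms by linarith+
  then show ?thesis by simp
next
  case False
  define L where "L = v - u + d"
  define a where "a = d / L"
  have L: "L > 0" using False assms unfolding L_def by simp
  have a: "0 \<le> a" "a \<le> 1" using L assms by (auto simp: L_def a_def)
  have "a * L = d" using L by (simp add: a_def)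
  then have "u + d = (1 - a) *\<^sub>R u + a *\<^sub>R (v + d)" "v = a *\<^sub>R u + (1 - a) *\<^sub>R (v + d)"
    by (simp_all add: L_def algebra_simps)
  then have "\<phi> (u + d) \<le> (1 - a) * \<phi> u + a * \<phi> (v + d)"
    and "\<phi> v \<le> a * \<phi> u + (1 - a) * \<phi> (v + d)"
    using convex_onD[OF conv, of a u "v + d"] convex_onD[OF conv, of "1 - a" u "v + d"] I a
    by simp_all
  then show ?thesis by (simp add: algebra_simps)
qed

lemma convex_on_midpoint:
  fixes \<phi> :: "real \<Rightarrow> real"
  assumes "convex_on I \<phi>" "c - t \<in> I" "c + t \<in> I"
  shows "2 * \<phi> c \<le> \<phi> (c - t) + \<phi> (c + t)"
proof -
  have "c = (1 - 1/2) *\<^sub>R (c - t) + (1/2) *\<^sub>R (c + t)"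
    by (simp add: field_simps)
  then have "\<phi> c \<le> (1 - 1/2) * \<phi> (c - t) + 1/2 * \<phi> (c + t)"
    using convex_onD[OF assms(1), of "1/2" "c - t" "c + t"] assms(2,3) by simp
  then show ?thesis by simp
qed

lemma convex_quadratic_piece_coeff_nonneg:
  fixes \<phi> :: "real \<Rightarrow> real"
  assumes conv: "convex_on I \<phi>" and "{L..R} \<subseteq> I" "L < R"
    and q: "\<And>z. z \<in> {L..R} \<Longrightarrow> \<phi> z = 1/2 * h * z^2 + f * z + g"
  shows "h \<ge> 0"
proof -
  define c where "c = (L + R) / 2"
  define t where "t = (R - L) / 2"
  have "c - t = L" "c + t = R" "c \<in> {L..R}" "t > 0"
    using \<open>L < R\<close> by (auto simp: c_def t_def field_simps)
  moreover have "L \<in> I" "R \<in> I"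
    using assms(2,3) by (auto simp: subset_iff)
  ultimately have "2 * \<phi> c \<le> \<phi> (c - t) + \<phi> (c + t)"
    using convex_on_midpoint[OF conv, of c t] by simp
  moreover have "\<phi> (c - t) + \<phi> (c + t) - 2 * \<phi> c = h * t^2"
  proof -
    have "\<phi> (c - t) = 1/2 * h * (c - t)^2 + f * (c - t) + g"
      and "\<phi> (c + t) = 1/2 * h * (c + t)^2 + f * (c + t) + g"
      and "\<phi> c = 1/2 * h * c^2 + f * c + g"
      using q \<open>c - t = L\<close> \<open>c + t = R\<close> \<open>c \<in> {L..R}\<close> \<open>L < R\<close> by auto
    then show ?thesis by (simp add: power2_eq_square algebra_simps)
  qed
  ultimately have "h * t^2 \<ge> 0" by linarith
  then show ?thesis
    using \<open>t > 0\<close> by (simp add: zero_le_mult_iff)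
qed

lemma convex_quadratic_pieces_strict_at_junction:
  fixes \<phi> :: "real \<Rightarrow> real"
  assumes conv: "convex_on I \<phi>" and I: "{M - d..M + d} \<subseteq> I" and "0 < d"
    and q1: "\<And>z. z \<in> {M - d..M} \<Longrightarrow> \<phi> z = 1/2 * h1 * z^2 + f1 * z + g1"
    and q2: "\<And>z. z \<in> {M..M + d} \<Longrightarrow> \<phi> z = 1/2 * h2 * z^2 + f2 * z + g2"
    and nondeg: "h1 > 0 \<or> (f1, g1) \<noteq> (f2, g2)"
  shows "\<phi> M - \<phi> (M - d) < \<phi> (M + d) - \<phi> M"
  \<comment> \<open>Otherwise midpoint convexity at \<open>M\<close> forces both curvatures to vanish and the
     slopes to agree, so the two pieces coincide.\<close>
proof (rule ccontr)
  assume not_strict: "\<not> ?thesis"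
  have "h1 \<ge> 0"
    by (rule convex_quadratic_piece_coeff_nonneg[OF conv _ _ q1]) (use I \<open>0 < d\<close> in auto)
  have "h2 \<ge> 0"
    by (rule convex_quadratic_piece_coeff_nonneg[OF conv _ _ q2]) (use I \<open>0 < d\<close> in auto)
  define P1 where "P1 = h1 * M + f1"
  define P2 where "P2 = h2 * M + f2"
  have M1: "\<phi> M = 1/2 * h1 * M^2 + f1 * M + g1" and M2: "\<phi> M = 1/2 * h2 * M^2 + f2 * M + g2"
    using q1[of M] q2[of M] \<open>0 < d\<close> by auto
  have left: "\<phi> (M - d) = \<phi> M - d * P1 + h1 * d^2 / 2"
    "\<phi> (M - d/2) = \<phi> M - d * P1 / 2 + h1 * d^2 / 8"
    using q1[of "M - d"] q1[of "M - d/2"] M1 \<open>0 < d\<close>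
    by (simp_all add: P1_def power2_eq_square field_simps)
  have right: "\<phi> (M + d) = \<phi> M + d * P2 + h2 * d^2 / 2"
    "\<phi> (M + d/2) = \<phi> M + d * P2 / 2 + h2 * d^2 / 8"
    using q2[of "M + d"] q2[of "M + d/2"] M2 \<open>0 < d\<close>
    by (simp_all add: P2_def power2_eq_square field_simps)
  have mid: "2 * \<phi> M \<le> \<phi> (M - d/2) + \<phi> (M + d/2)"
    using convex_on_midpoint[OF conv, of M "d/2"] I \<open>0 < d\<close> by (auto simp: subset_iff)
  have "h1 * d^2 + h2 * d^2 \<le> 0"
    using not_strict left right mid by linarith
  moreover have "h1 * d^2 \<ge> 0" "h2 * d^2 \<ge> 0"
    using \<open>h1 \<ge> 0\<close> \<open>h2 \<ge> 0\<close> by simp_all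
  ultimately have "h1 * d^2 = 0" "h2 * d^2 = 0"
    by linarith+
  then have "h1 = 0" "h2 = 0"
    using \<open>0 < d\<close> by simp_all
  then have "d * P1 = d * P2"
    using not_strict left right mid by simp
  then have "f1 = f2"
    using \<open>0 < d\<close> \<open>h1 = 0\<close> \<open>h2 = 0\<close> by (simp add: P1_def P2_def)
  then show False
    using nondeg M1 M2 \<open>h1 = 0\<close> \<open>h2 = 0\<close> by simp
qed

lemma sum_transfer_between_two:
  fixes G :: "'b::ab_group_add \<Rightarrow> 'c::ab_group_add"
  assumes "finite A" "s \<in> A" "r \<in> A" "s \<noteq> r"
  shows "(\<Sum>t\<in>A. G ((y(s := y s + e, r := y r - e)) t) - K t) =
         (\<Sum>t\<in>A. G (y t) - K t) + (G (y s + e) - G (y s)) + (G (y r - e) - G (y r))"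
proof -
  let ?y' = "y(s := y s + e, r := y r - e)"
  have "(\<Sum>t\<in>A. G (?y' t) - K t) = (\<Sum>t\<in>A. G (y t) - K t) + (\<Sum>t\<in>A. G (?y' t) - G (y t))"
    by (simp add: sum_subtractf)
  also have "(\<Sum>t\<in>A. G (?y' t) - G (y t)) = (\<Sum>t\<in>{s, r}. G (?y' t) - G (y t))"
    using assms by (intro sum.mono_neutral_right) auto
  finally show ?thesis
    using assms by (auto simp: ac_simps fun_upd_def)
qed

lemma sum_increments_pivot:
  fixes G :: "real \<Rightarrow> 'a::ab_group_add" and k N :: nat
  assumes k: "k \<in> {1..N}"
    and below: "\<And>s. s \<in> {1..N} \<Longrightarrow> s < k \<Longrightarrow> y s = Z s"
    and above: "\<And>s. s \<in> {1..N} \<Longrightarrow> k < s \<Longrightarrow> y s = Z (s - 1)"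
  shows "(\<Sum>s=1..N. G (y s) - G (Z (s - 1))) = G (y k) - G (Z 0)"
proof -
  have "{1..N} = {1..k - 1} \<union> {k} \<union> {k + 1..N}"
    using k by auto
  then have "(\<Sum>s=1..N. G (y s) - G (Z (s - 1)))
      = (\<Sum>s=1..k - 1. G (y s) - G (Z (s - 1))) + (G (y k) - G (Z (k - 1)))
        + (\<Sum>s=k + 1..N. G (y s) - G (Z (s - 1)))"
    using k by (auto simp: sum.union_disjoint sum.insert_if ac_simps)
  also have "(\<Sum>s=1..k - 1. G (y s) - G (Z (s - 1))) = (\<Sum>s=1..k - 1. G (Z s) - G (Z (s - 1)))"
    using below k by (intro sum.cong) auto
  also have "\<dots> = G (Z (k - 1)) - G (Z 0)"
    by (rule sum_diff_pred_telescope)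
  also have "(\<Sum>s=k + 1..N. G (y s) - G (Z (s - 1))) = 0"
    using above k by (intro sum.neutral) auto
  finally show ?thesis
    by simp
qed

definition in_segments :: "nat \<Rightarrow> (nat \<Rightarrow> real) \<Rightarrow> (nat \<Rightarrow> real) \<Rightarrow> bool" where
  "in_segments N Z y \<longleftrightarrow> (\<forall>r\<in>{1..N}. Z (r - 1) \<le> y r \<and> y r \<le> Z r)"

definition fills_in_order :: "nat \<Rightarrow> (nat \<Rightarrow> real) \<Rightarrow> (nat \<Rightarrow> real) \<Rightarrow> bool" where
  "fills_in_order N Z y \<longleftrightarrow>
     (\<forall>r\<in>{1..N}. \<forall>s\<in>{1..N}. s < r \<longrightarrow> Z (r - 1) < y r \<longrightarrow> y s = Z s)"

definition lifted_total :: "nat \<Rightarrow> (nat \<Rightarrow> real) \<Rightarrow> (nat \<Rightarrow> real) \<Rightarrow> real" where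
  "lifted_total N Z y = Z 0 + (\<Sum>r=1..N. y r - Z (r - 1))"

definition segment_clamp :: "(nat \<Rightarrow> real) \<Rightarrow> real \<Rightarrow> nat \<Rightarrow> real" where
  "segment_clamp Z z r = max (Z (r - 1)) (min z (Z r))"

lemma lifted_feasible_iff:
  "lifted_feasible N Z A B C w y \<longleftrightarrow>
     in_segments N Z y \<and> vec_le (lifted_total N Z y *\<^sub>R A + B *v w) C"
  by (simp add: lifted_feasible_def in_segments_def lifted_total_def)

lemma fills_in_orderD:
  assumes "fills_in_order N Z y" "1 \<le> s" "s < r" "r \<le> N" "Z (r - 1) < y r"
  shows "y s = Z s"
proof -
  have "r \<in> {1..N}" "s \<in> {1..N}"
    using assms by auto
  then show ?thesis
    using assms unfolding fills_in_order_def by blast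
qed

locale convex_quadratic_spline =
  fixes N :: nat and Z :: "nat \<Rightarrow> real" and \<phi> :: "real \<Rightarrow> real" and h f g :: "nat \<Rightarrow> real"
  assumes N_pos: "1 \<le> N"
    and breakpoints_increasing: "\<And>r. r \<in> {1..N} \<Longrightarrow> Z (r - 1) < Z r"
    and convex: "convex_on {Z 0..Z N} \<phi>"
    and pieces: "\<And>r z. r \<in> {1..N} \<Longrightarrow> z \<in> {Z (r - 1)..Z r} \<Longrightarrow>
                   \<phi> z = 1/2 * h r * z^2 + f r * z + g r"
    and nondegenerate: "\<And>r. r \<in> {1..N - 1} \<Longrightarrow> h r > 0 \<or> (f r, g r) \<noteq> (f (r + 1), g (r + 1))"
begin

lemma breakpoints_mono:
  assumes "i \<le> j" "j \<le> N"
  shows "Z i \<le> Z j"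
proof (rule lift_Suc_mono_le_ivl[of "{0..<N}"])
  show "Z n \<le> Z (Suc n)" if "n \<in> {0..<N}" for n
    using breakpoints_increasing[of "Suc n"] that by simp
qed (use assms in auto)

lemma transfer_strictly_decreases:
  assumes "1 \<le> s" "s < r" "r \<le> N" "0 < e" "e \<le> Z (s + 1) - Z s"
    and "Z (s - 1) \<le> a" "a + e \<le> Z s" "Z (r - 1) \<le> b - e" "b \<le> Z r"
  shows "\<phi> (a + e) - \<phi> a + (\<phi> (b - e) - \<phi> b) < 0"
proof -
  have Z: "Z 0 \<le> Z (s - 1)" "Z s \<le> Z (r - 1)" "Z (s + 1) \<le> Z N" "Z r \<le> Z N"
    using assms by (auto intro!: breakpoints_mono)
  have "\<phi> (a + e) - \<phi> a \<le> \<phi> (Z s) - \<phi> (Z s - e)"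
    using convex_on_increment_mono[OF convex, of a "Z s - e" e] assms Z by simp
  also have "\<dots> < \<phi> (Z s + e) - \<phi> (Z s)"
  proof (rule convex_quadratic_pieces_strict_at_junction[OF convex])
    show "\<phi> z = 1/2 * h s * z^2 + f s * z + g s" if "z \<in> {Z s - e..Z s}" for z
      using pieces[of s z] that assms by auto
    show "\<phi> z = 1/2 * h (s + 1) * z^2 + f (s + 1) * z + g (s + 1)" if "z \<in> {Z s..Z s + e}" for z
      using pieces[of "s + 1" z] that assms by auto
    show "h s > 0 \<or> (f s, g s) \<noteq> (f (s + 1), g (s + 1))"
      using nondegenerate[of s] assms by auto
  qed (use assms Z in auto)
  also have "\<dots> \<le> \<phi> b - \<phi> (b - e)"
    using convex_on_increment_mono[OF convex, of "Z s" "b - e" e] assms Z by simp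
  finally show ?thesis
    by simp
qed

lemma transfer_improves:
  assumes y: "in_segments N Z y" and sr: "1 \<le> s" "s < r" "r \<le> N"
    and "y s < Z s" "Z (r - 1) < y r"
  obtains y' where "in_segments N Z y'" "lifted_total N Z y' = lifted_total N Z y"
    "(\<Sum>t=1..N. \<phi> (y' t) - \<phi> (Z (t - 1))) < (\<Sum>t=1..N. \<phi> (y t) - \<phi> (Z (t - 1)))"
proof
  define e where "e = min (min (Z s - y s) (y r - Z (r - 1))) (Z (s + 1) - Z s)"
  define y' where "y' = y(s := y s + e, r := y r - e)"
  have bounds: "Z (t - 1) \<le> y t" "y t \<le> Z t" if "t \<in> {1..N}" for t
    using y that by (auto simp: in_segments_def)
  have e: "0 < e" "y s + e \<le> Z s" "Z (r - 1) \<le> y r - e" "e \<le> Z (s + 1) - Z s"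
    using assms breakpoints_increasing[of "s + 1"] by (auto simp: e_def)
  have "Z (s - 1) \<le> y s + e" "y r - e \<le> Z r"
    using bounds[of s] bounds[of r] sr e by auto
  then show "in_segments N Z y'"
    unfolding in_segments_def y'_def using bounds e sr by auto
  show "lifted_total N Z y' = lifted_total N Z y"
    using sum_transfer_between_two[of "{1..N}" s r "\<lambda>x. x" y e "\<lambda>t. Z (t - 1)"] sr
    by (simp add: lifted_total_def y'_def)
  have "\<phi> (y s + e) - \<phi> (y s) + (\<phi> (y r - e) - \<phi> (y r)) < 0"
    using transfer_strictly_decreases[OF sr e(1,4)] e bounds[of s] bounds[of r] sr by simp
  then show "(\<Sum>t=1..N. \<phi> (y' t) - \<phi> (Z (t - 1))) < (\<Sum>t=1..N. \<phi> (y t) - \<phi> (Z (t - 1)))"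
    using sum_transfer_between_two[of "{1..N}" s r \<phi> y e "\<lambda>t. \<phi> (Z (t - 1))"] sr
    by (simp add: y'_def)
qed

lemma fills_in_order_pivot:
  assumes "in_segments N Z y" "fills_in_order N Z y"
  obtains k where "k \<in> {1..N}"
    "\<And>s. s \<in> {1..N} \<Longrightarrow> s < k \<Longrightarrow> y s = Z s"
    "\<And>s. s \<in> {1..N} \<Longrightarrow> k < s \<Longrightarrow> y s = Z (s - 1)"
proof
  define k where "k = Max (insert 1 {r \<in> {1..N}. Z (r - 1) < y r})"
  have fin: "finite (insert 1 {r \<in> {1..N}. Z (r - 1) < y r})"
    by simp
  show k: "k \<in> {1..N}"
    using Max_in[OF fin] N_pos unfolding k_def by auto
  show "y s = Z s" if "s \<in> {1..N}" "s < k" for s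
  proof -
    have "k \<noteq> 1" using that by auto
    then have "Z (k - 1) < y k"
      using Max_in[OF fin] unfolding k_def by auto
    then show ?thesis
      using assms(2) k that unfolding fills_in_order_def by blast
  qed
  show "y s = Z (s - 1)" if "s \<in> {1..N}" "k < s" for s
  proof -
    have "\<not> Z (s - 1) < y s"
    proof
      assume "Z (s - 1) < y s"
      then have "s \<le> k"
        using Max_ge[OF fin, of s] that unfolding k_def by blast
      then show False
        using that by simp
    qed
    moreover have "Z (s - 1) \<le> y s"
      using assms(1) that unfolding in_segments_def by blast
    ultimately show ?thesis
      by linarith
  qed
qed

lemma fills_in_order_increments:
  fixes G :: "real \<Rightarrow> 'a::ab_group_add"
  assumes "in_segments N Z y" "fills_in_order N Z y"
  shows "(\<Sum>s=1..N. G (y s) - G (Z (s - 1))) = G (lifted_total N Z y) - G (Z 0)"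
proof -
  obtain k where k: "k \<in> {1..N}"
    "\<And>s. s \<in> {1..N} \<Longrightarrow> s < k \<Longrightarrow> y s = Z s"
    "\<And>s. s \<in> {1..N} \<Longrightarrow> k < s \<Longrightarrow> y s = Z (s - 1)"
    using fills_in_order_pivot[OF assms] by blast
  have "lifted_total N Z y = y k"
    using sum_increments_pivot[where G = "\<lambda>x. x" and y = y and Z = Z, OF k]
    by (simp add: lifted_total_def)
  then show ?thesis
    using sum_increments_pivot[where G = G and y = y and Z = Z, OF k] by simp
qed

lemma lifted_total_bounds:
  assumes "in_segments N Z y"
  shows "Z 0 \<le> lifted_total N Z y" "lifted_total N Z y \<le> Z N"
proof -
  have "0 \<le> (\<Sum>r=1..N. y r - Z (r - 1))"
    using assms by (intro sum_nonneg) (auto simp: in_segments_def)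
  then show "Z 0 \<le> lifted_total N Z y"
    by (simp add: lifted_total_def)
  have "(\<Sum>r=1..N. y r - Z (r - 1)) \<le> (\<Sum>r=1..N. Z r - Z (r - 1))"
    using assms by (intro sum_mono) (auto simp: in_segments_def)
  also have "\<dots> = Z N - Z 0"
    by (rule sum_diff_pred_telescope)
  finally show "lifted_total N Z y \<le> Z N"
    by (simp add: lifted_total_def)
qed

lemma segment_clamp_in_segments: "in_segments N Z (segment_clamp Z z)"
  using breakpoints_increasing by (fastforce simp: in_segments_def segment_clamp_def)

lemma segment_clamp_fills_in_order: "fills_in_order N Z (segment_clamp Z z)"
  unfolding fills_in_order_def segment_clamp_def
proof (intro ballI impI)
  fix r s assume "r \<in> {1..N}" "s \<in> {1..N}" "s < r" "Z (r - 1) < max (Z (r - 1)) (min z (Z r))"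
  moreover have "Z s \<le> Z (r - 1)" "Z (s - 1) < Z s"
    using calculation breakpoints_increasing[of s] by (auto intro: breakpoints_mono)
  ultimately show "max (Z (s - 1)) (min z (Z s)) = Z s"
    by auto
qed

lemma segment_clamp_total:
  assumes "z \<in> {Z 0..Z N}"
  shows "lifted_total N Z (segment_clamp Z z) = z"
proof -
  have "segment_clamp Z z r - Z (r - 1) = min z (Z r) - min z (Z (r - 1))" if "r \<in> {1..N}" for r
    using breakpoints_increasing[OF that] by (auto simp: segment_clamp_def)
  then have "(\<Sum>r=1..N. segment_clamp Z z r - Z (r - 1))
      = (\<Sum>r=1..N. min z (Z r) - min z (Z (r - 1)))"
    by (rule sum.cong[OF refl])
  also have "\<dots> = min z (Z N) - min z (Z 0)"
    by (rule sum_diff_pred_telescope)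
  finally show ?thesis
    using assms by (simp add: lifted_total_def)
qed

lemma fills_in_order_lower_tail:
  assumes "in_segments N Z y" "fills_in_order N Z y"
    and "r \<in> {1..N}" "y r = Z (r - 1)" "s \<in> {r + 1..N}"
  shows "y s = Z (s - 1)"
proof (rule ccontr)
  assume "y s \<noteq> Z (s - 1)"
  moreover have "Z (s - 1) \<le> y s"
    using assms(1,3,5) unfolding in_segments_def by auto
  ultimately have "Z (s - 1) < y s"
    by simp
  then have "y r = Z r"
    using fills_in_orderD[OF assms(2), of r s] assms(3,5) by simp
  then show False
    using assms(4) breakpoints_increasing[OF assms(3)] by simp
qed

lemma lifted_obj_fills_in_order:
  assumes "in_segments N Z y" "fills_in_order N Z y"
  shows "lifted_obj \<gamma> \<phi> N Z w y = \<gamma> w + \<phi> (lifted_total N Z y)"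
  using fills_in_order_increments[OF assms, of \<phi>] by (simp add: lifted_obj_def)

context
  fixes \<gamma> :: "real^'n \<Rightarrow> real" and A :: "real^'m" and B :: "real^'n^'m" and C :: "real^'m"
    and wopt :: "real^'n" and yopt :: "nat \<Rightarrow> real"
  assumes opt_feas: "lifted_feasible N Z A B C wopt yopt"
    and opt_min: "\<And>w y. lifted_feasible N Z A B C w y \<Longrightarrow>
                    lifted_obj \<gamma> \<phi> N Z wopt yopt \<le> lifted_obj \<gamma> \<phi> N Z w y"
begin

lemma optimizer_in_segments: "in_segments N Z yopt"
  using opt_feas by (simp add: lifted_feasible_iff)

lemma optimizer_fills_in_order: "fills_in_order N Z yopt"
  unfolding fills_in_order_def
proof (intro ballI impI, rule ccontr)
  fix r s assume rs: "r \<in> {1..N}" "s \<in> {1..N}" "s < r" "Z (r - 1) < yopt r" "yopt s \<noteq> Z s"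
  then have "yopt s < Z s"
    using optimizer_in_segments unfolding in_segments_def by force
  then obtain y where y: "in_segments N Z y" "lifted_total N Z y = lifted_total N Z yopt"
    "(\<Sum>t=1..N. \<phi> (y t) - \<phi> (Z (t - 1))) < (\<Sum>t=1..N. \<phi> (yopt t) - \<phi> (Z (t - 1)))"
    using transfer_improves[OF optimizer_in_segments] rs by auto
  have "lifted_feasible N Z A B C wopt y"
    using opt_feas y(1,2) by (simp add: lifted_feasible_iff)
  from opt_min[OF this] show False
    using y(3) by (simp add: lifted_obj_def)
qed

lemma optimizer_solves_original:
  defines "zopt \<equiv> lifted_total N Z yopt"
  shows "orig_feasible N Z A B C wopt zopt"
    and "orig_feasible N Z A B C w z \<Longrightarrow> \<gamma> wopt + \<phi> zopt \<le> \<gamma> w + \<phi> z"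
proof -
  show "orig_feasible N Z A B C wopt zopt"
    using opt_feas lifted_total_bounds[OF optimizer_in_segments]
    by (simp add: orig_feasible_def lifted_feasible_iff zopt_def)
  assume "orig_feasible N Z A B C w z"
  then have z: "z \<in> {Z 0..Z N}" and feas: "lifted_feasible N Z A B C w (segment_clamp Z z)"
    by (simp_all add: orig_feasible_def lifted_feasible_iff segment_clamp_in_segments
        segment_clamp_total)
  have "\<gamma> wopt + \<phi> zopt = lifted_obj \<gamma> \<phi> N Z wopt yopt"
    unfolding zopt_def
    by (rule lifted_obj_fills_in_order[OF optimizer_in_segments optimizer_fills_in_order, symmetric])
  also have "\<dots> \<le> lifted_obj \<gamma> \<phi> N Z w (segment_clamp Z z)"
    by (rule opt_min[OF feas])
  also have "\<dots> = \<gamma> w + \<phi> (lifted_total N Z (segment_clamp Z z))"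
    by (rule lifted_obj_fills_in_order[OF segment_clamp_in_segments segment_clamp_fills_in_order])
  also have "\<dots> = \<gamma> w + \<phi> z"
    using segment_clamp_total[OF z] by simp
  finally show "\<gamma> wopt + \<phi> zopt \<le> \<gamma> w + \<phi> z" .
qed

end

end

theorem theorem2:
  fixes \<gamma> :: "real^'n \<Rightarrow> real" and \<phi> :: "real \<Rightarrow> real"
    and A :: "real^'m" and B :: "real^'n^'m" and C :: "real^'m"
    and N :: nat and Z h f g :: "nat \<Rightarrow> real"
    and wopt :: "real^'n" and yopt :: "nat \<Rightarrow> real"
  assumes gamma: "convex_piecewise_quadratic \<gamma>"
    and N: "N \<ge> 1"
    and Zmono: "\<And>r. r \<in> {1..N} \<Longrightarrow> Z (r - 1) < Z r"
    and phi_conv: "convex_on {Z 0..Z N} \<phi>"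
    and phi_form: "\<And>r z. r \<in> {1..N} \<Longrightarrow> z \<in> {Z (r - 1)..Z r} \<Longrightarrow>
                     \<phi> z = (1/2) * h r * z^2 + f r * z + g r"
    and nondeg: "\<And>r. r \<in> {1..N-1} \<Longrightarrow> h r > 0 \<or> (f r, g r) \<noteq> (f (r+1), g (r+1))"
    and opt_feas: "lifted_feasible N Z A B C wopt yopt"
    and opt_min: "\<And>w y. lifted_feasible N Z A B C w y \<Longrightarrow>
                    lifted_obj \<gamma> \<phi> N Z wopt yopt \<le> lifted_obj \<gamma> \<phi> N Z w y"
  shows "(\<forall>r\<in>{2..N}. yopt r > Z (r - 1) \<longrightarrow> (\<forall>s\<in>{1..r-1}. yopt s = Z s))
       \<and> (\<forall>r\<in>{1..N-1}. yopt r = Z (r - 1) \<longrightarrow> (\<forall>s\<in>{r+1..N}. yopt s = Z (s - 1)))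
       \<and> (let zopt = Z 0 + (\<Sum>r=1..N. yopt r - Z (r - 1)) in
            orig_feasible N Z A B C wopt zopt \<and>
            (\<forall>w z. orig_feasible N Z A B C w z \<longrightarrow> \<gamma> wopt + \<phi> zopt \<le> \<gamma> w + \<phi> z))"
proof -
  interpret convex_quadratic_spline N Z \<phi> h f g
    using N Zmono phi_conv phi_form nondeg by unfold_locales auto
  have segments: "in_segments N Z yopt" and ordered: "fills_in_order N Z yopt"
    using optimizer_in_segments optimizer_fills_in_order opt_feas opt_min by blast+
  have "\<forall>r\<in>{2..N}. yopt r > Z (r - 1) \<longrightarrow> (\<forall>s\<in>{1..r-1}. yopt s = Z s)"
  proof (intro ballI impI)
    fix r s assume "r \<in> {2..N}" "Z (r - 1) < yopt r" "s \<in> {1..r - 1}"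
    then show "yopt s = Z s"
      using fills_in_orderD[OF ordered, of s r] by auto
  qed
  moreover have "\<forall>r\<in>{1..N-1}. yopt r = Z (r - 1) \<longrightarrow> (\<forall>s\<in>{r+1..N}. yopt s = Z (s - 1))"
    using fills_in_order_lower_tail[OF segments ordered] by auto
  moreover note optimizer_solves_original[OF opt_feas opt_min]
  ultimately show ?thesis
    by (simp add: Let_def lifted_total_def)
qed

end
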